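(* Let $G$ be a graph, $(\mathcal T,\{B_i\})$ a tree decomposition of $G$, $\{\mu_L\}$ a consistent family of distributions for it, and $f$ the output of SC-Round on these inputs. Let $e\notin V(G)$ be a new dummy vertex and let $(\mathcal T,\{B'_i\})$ with $B'_i=B_i\cup\{e\}$. Then there exists a consistent family $\{\mu'_{L'}\}$ for $(\mathcal T,\{B'_i\})$, indexed by $L'=L\cup\{e\}$, which is symmetric, i.e. $\Pr_{g\sim\mu'_{L'}}[g=g']=\Pr_{g\sim\mu'_{L'}}[g=\overline{g'}]$ for all $L'$-assignments $g'$, such that the output $f^*$ of SC-Round on $(\mathcal T,\{B'_i\})$ with $\{\mu'_{L'}\}$ satisfies, for every $V(G)$-assignment $f'$, $$\Pr[f=f']+\Pr[f=\overline{f'}] = \Pr[f^*|_{V(G)}=f']+\Pr[f^*|_{V(G)}=\overline{f'}].$$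
   Context: For a finite set $X$, an $X$-assignment is a map $X\to\{0,1\}$; its mirror is $\overline{g}=1-g$. Consistent family for a tree decomposition $(\mathcal T,\{B_i\})$ of $G$: for every set $L=B_i\cup\{s,t\}$ ($i\in V(\mathcal T)$, $s,t$ vertices) a distribution $\mu_L$ on $L$-assignments such that marginals of $\mu_L,\mu_{L'}$ agree on $L\cap L'$. SC-Round: choose a start node $i_0$, sample $f|_{B_{i_0}}\sim\mu_{B_{i_0}}$; process remaining nodes in non-decreasing distance from $i_0$; for node $i$ with already processed neighbour $j$, let $B^+=B_i\cap B_j$, $B^-=B_i\setminus B^+$, and sample $f|_{B^-}$ from $\mu_{B_i}$ conditioned on agreement with $f$ on $B^+$. Output $f$. *)

theory Defs
  imports "HOL-Probability.Probability_Mass_Function"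
begin

text \<open>Assignments: an X-assignment is a partial map with domain exactly X
  (values in bool, False = 0, True = 1).  The mirror flips every value.\<close>

type_synonym 'v assignment = "'v \<Rightarrow> bool option"

definition mirror :: "'v assignment \<Rightarrow> 'v assignment" where
  "mirror g = (\<lambda>x. map_option Not (g x))"

definition is_tree :: "'n set \<Rightarrow> ('n \<times> 'n) set \<Rightarrow> bool" where
  "is_tree I TE \<longleftrightarrow> finite I \<and> I \<noteq> {} \<and> TE \<subseteq> I \<times> I \<and> sym TE \<and> irrefl TE
     \<and> (\<forall>i\<in>I. \<forall>j\<in>I. (i, j) \<in> TE\<^sup>*) \<and> card TE = 2 * (card I - 1)"

definition tree_decomposition ::
  "'v set \<Rightarrow> ('v \<times> 'v) set \<Rightarrow> 'n set \<Rightarrow> ('n \<times> 'n) set \<Rightarrow> ('n \<Rightarrow> 'v set) \<Rightarrow> bool" where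
  "tree_decomposition V E I TE B \<longleftrightarrow>
     finite V \<and> E \<subseteq> V \<times> V \<and> is_tree I TE
     \<and> (\<forall>i\<in>I. B i \<subseteq> V) \<and> (\<Union>i\<in>I. B i) = V
     \<and> (\<forall>(u, w)\<in>E. \<exists>i\<in>I. u \<in> B i \<and> w \<in> B i)
     \<and> (\<forall>v\<in>V. \<forall>i\<in>I. \<forall>j\<in>I. v \<in> B i \<longrightarrow> v \<in> B j \<longrightarrow>
           (i, j) \<in> (TE \<inter> {k\<in>I. v \<in> B k} \<times> {k\<in>I. v \<in> B k})\<^sup>*)"

definition fam_sets :: "'v set \<Rightarrow> 'n set \<Rightarrow> ('n \<Rightarrow> 'v set) \<Rightarrow> 'v set set" where
  "fam_sets V I B = {B i \<union> {s, t} | i s t. i \<in> I \<and> s \<in> V \<and> t \<in> V}"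

definition consistent_family ::
  "'v set \<Rightarrow> 'n set \<Rightarrow> ('n \<Rightarrow> 'v set) \<Rightarrow> ('v set \<Rightarrow> 'v assignment pmf) \<Rightarrow> bool" where
  "consistent_family V I B \<mu> \<longleftrightarrow>
     (\<forall>L\<in>fam_sets V I B. \<forall>g\<in>set_pmf (\<mu> L). dom g = L)
     \<and> (\<forall>L\<in>fam_sets V I B. \<forall>L'\<in>fam_sets V I B.
          map_pmf (\<lambda>g. g |` (L \<inter> L')) (\<mu> L) = map_pmf (\<lambda>g. g |` (L \<inter> L')) (\<mu> L'))"

definition symmetric_family ::
  "'v set \<Rightarrow> 'n set \<Rightarrow> ('n \<Rightarrow> 'v set) \<Rightarrow> ('v set \<Rightarrow> 'v assignment pmf) \<Rightarrow> bool" where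
  "symmetric_family V I B \<mu> \<longleftrightarrow>
     (\<forall>L\<in>fam_sets V I B. \<forall>g'. dom g' = L \<longrightarrow> pmf (\<mu> L) g' = pmf (\<mu> L) (mirror g'))"

definition tdist :: "('n \<times> 'n) set \<Rightarrow> 'n \<Rightarrow> 'n \<Rightarrow> nat" where
  "tdist TE i j = (LEAST k. (i, j) \<in> TE ^^ k)"

definition sc_order :: "'n set \<Rightarrow> ('n \<times> 'n) set \<Rightarrow> 'n \<Rightarrow> 'n list \<Rightarrow> bool" where
  "sc_order I TE i0 ns \<longleftrightarrow> i0 \<in> I \<and> ns \<noteq> [] \<and> hd ns = i0 \<and> distinct ns \<and> set ns = I
     \<and> sorted (map (tdist TE i0) ns)"

text \<open>One pass over the remaining nodes: node i with an already processed
  neighbour j; B+ = B i \<inter> B j, B- = B i - B+; sample f on B- from \<mu>(B i)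
  conditioned on agreement with f on B+.\<close>

primrec sc_steps ::
  "'n list \<Rightarrow> ('v set \<Rightarrow> 'v assignment pmf) \<Rightarrow> ('n \<Rightarrow> 'v set) \<Rightarrow> ('n \<times> 'n) set
     \<Rightarrow> 'n list \<Rightarrow> 'v assignment \<Rightarrow> 'v assignment pmf" where
  "sc_steps [] \<mu> B TE done f = return_pmf f"
| "sc_steps (i # is) \<mu> B TE done f =
     (let j = (SOME j. j \<in> set done \<and> (j, i) \<in> TE);
          Bp = B i \<inter> B j;
          Bm = B i - Bp
      in bind_pmf (cond_pmf (\<mu> (B i)) {g. g |` Bp = f |` Bp})
           (\<lambda>g. sc_steps is \<mu> B TE (done @ [i]) (f ++ (g |` Bm))))"

definition sc_round ::
  "('v set \<Rightarrow> 'v assignment pmf) \<Rightarrow> ('n \<Rightarrow> 'v set) \<Rightarrow> ('n \<times> 'n) set \<Rightarrow> 'n list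
     \<Rightarrow> 'v assignment pmf" where
  "sc_round \<mu> B TE ns =
     bind_pmf (\<mu> (B (hd ns))) (\<lambda>g. sc_steps (tl ns) \<mu> B TE [hd ns] (g |` B (hd ns)))"

end

theory Submission
  imports Defs
begin

text \<open>Extend every assignment by the dummy vertex e with value 0 and then, by a fair coin,
  either keep it or mirror it entirely.  The resulting family is consistent and symmetric, and
  the mirror coin commutes with every step of SC-Round: conditioning the new bag distribution on
  a (possibly mirrored) partial assignment produces the same coin together with the old
  conditional distribution.  Hence the new output is the old output, mirrored with probability
  1/2 (the value at e recording which), and the sums over an assignment and its mirror agree.
  The coupling step by step needs every conditioning event to have positive probability, which
  follows from the consistency of the family together with the running intersection property of
  the tree decomposition and the breadth-first processing order.\<close>

lemma mirror_mirror [simp]: "mirror (mirror g) = g"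
  unfolding mirror_def by (simp add: option.map_comp o_def option.map_ident)

lemma inj_mirror: "inj mirror"
  by (metis injI mirror_mirror)

lemma dom_mirror [simp]: "dom (mirror g) = dom g"
  unfolding mirror_def by auto

lemma restrict_map_dom_subset:
  assumes "dom h \<subseteq> X"
  shows "h |` X = h"
proof
  fix x
  show "(h |` X) x = h x"
  proof (cases "x \<in> X")
    case False
    then have "x \<notin> dom h" using assms by blast
    then show ?thesis using False by (simp add: domIff)
  qed simp
qed

text \<open>The value of \<open>dummy_ext e b h\<close> at e is b: it records whether h was mirrored.\<close>

definition dummy_ext :: "'v \<Rightarrow> bool \<Rightarrow> 'v assignment \<Rightarrow> 'v assignment" where
  "dummy_ext e b h = (if b then mirror (h(e \<mapsto> False)) else h(e \<mapsto> False))"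

lemma dom_dummy_ext [simp]: "dom (dummy_ext e b h) = insert e (dom h)"
  unfolding dummy_ext_def by auto

lemma mirror_dummy_ext: "mirror (dummy_ext e b h) = dummy_ext e (\<not> b) h"
  unfolding dummy_ext_def by auto

lemma dummy_ext_restrict_in: "e \<in> X \<Longrightarrow> dummy_ext e b h |` X = dummy_ext e b (h |` (X - {e}))"
  unfolding dummy_ext_def mirror_def by (rule ext) (auto simp: restrict_map_def)

lemma dummy_ext_restrict_out:
  "e \<notin> X \<Longrightarrow> dummy_ext e b h |` X = (if b then mirror (h |` X) else h |` X)"
  unfolding dummy_ext_def mirror_def by (rule ext) (auto simp: restrict_map_def)

lemma dummy_ext_map_add_restrict:
  "e \<notin> X \<Longrightarrow> dummy_ext e b f ++ dummy_ext e b g |` X = dummy_ext e b (f ++ g |` X)"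
  unfolding dummy_ext_def mirror_def
  by (rule ext) (auto simp: map_add_def restrict_map_def split: option.split)

lemma dummy_ext_eq_iff:
  assumes "e \<notin> dom h1" "e \<notin> dom h2"
  shows "dummy_ext e b1 h1 = dummy_ext e b2 h2 \<longleftrightarrow> b1 = b2 \<and> h1 = h2"
proof
  assume eq: "dummy_ext e b1 h1 = dummy_ext e b2 h2"
  then have "dummy_ext e b1 h1 e = dummy_ext e b2 h2 e" by simp
  then have b: "b1 = b2" unfolding dummy_ext_def mirror_def by (auto split: if_splits)
  have "h1 x = h2 x" for x
  proof (cases "x = e")
    case True then show ?thesis using assms by (simp add: domIff)
  next
    case False
    then have "dummy_ext e b1 h1 |` {x} = dummy_ext e b2 h2 |` {x}" using eq by simp
    then have "(if b1 then mirror (h1 |` {x}) else h1 |` {x})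
        = (if b1 then mirror (h2 |` {x}) else h2 |` {x})"
      using False b by (simp add: dummy_ext_restrict_out)
    then have "h1 |` {x} = h2 |` {x}"
      by (metis mirror_mirror)
    then show ?thesis by (metis restrict_in singletonI)
  qed
  then show "b1 = b2 \<and> h1 = h2" using b by auto
qed auto

definition coin :: "bool pmf" where "coin = pmf_of_set UNIV"

lemma set_coin [simp]: "set_pmf coin = UNIV"
  unfolding coin_def by simp

lemma map_Not_coin: "map_pmf Not coin = coin"
proof -
  have "surj Not" by (rule surjI[of _ Not]) simp
  then show ?thesis
    unfolding coin_def using map_pmf_of_set_inj[of Not UNIV] by (simp add: inj_def)
qed

lemma measure_pair_pmf_singleton_times:
  "measure_pmf.prob (pair_pmf p q) ({a} \<times> A) = pmf p a * measure_pmf.prob q A"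
proof -
  have "{a} \<times> A = (\<lambda>(x, y). (x, y \<in> A)) -` {(a, True)}" by auto
  then have "measure_pmf.prob (pair_pmf p q) ({a} \<times> A)
      = pmf (map_pmf (\<lambda>(x, y). (x, y \<in> A)) (pair_pmf p q)) (a, True)"
    by (simp only: pmf_map)
  also have "map_pmf (\<lambda>(x, y). (x, y \<in> A)) (pair_pmf p q) = pair_pmf p (map_pmf (\<lambda>y. y \<in> A) q)"
    using map_pair[of id "\<lambda>y. y \<in> A" p q] by (simp add: id_def)
  finally show ?thesis by (simp add: pmf_pair pmf_map vimage_def)
qed

lemma cond_pair_pmf_singleton_times:
  assumes a: "a \<in> set_pmf p" and A: "set_pmf q \<inter> A \<noteq> {}"
  shows "cond_pmf (pair_pmf p q) ({a} \<times> A) = map_pmf (Pair a) (cond_pmf q A)"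
proof (rule pmf_eqI)
  fix x :: "'a \<times> 'b"
  obtain a' y where x: "x = (a', y)" by (cases x)
  have ne: "set_pmf (pair_pmf p q) \<inter> ({a} \<times> A) \<noteq> {}" using a A by auto
  have pa: "pmf p a \<noteq> 0" using a by (simp add: set_pmf_eq')
  show "pmf (cond_pmf (pair_pmf p q) ({a} \<times> A)) x = pmf (map_pmf (Pair a) (cond_pmf q A)) x"
  proof (cases "a' = a")
    case True
    have "pmf (map_pmf (Pair a) (cond_pmf q A)) x = pmf (cond_pmf q A) y"
      unfolding x True by (rule pmf_map_inj') (auto simp: inj_on_def)
    then show ?thesis
      using pa unfolding x True pmf_cond[OF ne] pmf_cond[OF A]
      by (simp add: measure_pair_pmf_singleton_times pmf_pair)
  next
    case False
    then have "pmf (map_pmf (Pair a) (cond_pmf q A)) x = 0"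
      unfolding x by (auto simp: pmf_eq_0_set_pmf)
    then show ?thesis using False unfolding x pmf_cond[OF ne] by simp
  qed
qed

text \<open>Restricting the sample to \<open>L - {e}\<close> makes the domain right even for
  \<open>L = {e}\<close>, where \<open>\<mu> {}\<close> is an arbitrary distribution.\<close>

definition dummy_family ::
  "'v \<Rightarrow> ('v set \<Rightarrow> 'v assignment pmf) \<Rightarrow> 'v set \<Rightarrow> 'v assignment pmf" where
  "dummy_family e \<mu> L =
     map_pmf (\<lambda>(b, g). dummy_ext e b (g |` (L - {e}))) (pair_pmf coin (\<mu> (L - {e})))"

lemma dummy_family_insert:
  "e \<notin> L \<Longrightarrow>
    dummy_family e \<mu> (insert e L) = map_pmf (\<lambda>(b, g). dummy_ext e b (g |` L)) (pair_pmf coin (\<mu> L))"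
  unfolding dummy_family_def by simp

lemma map_restrict_dummy_family:
  assumes "e \<in> X"
  shows "map_pmf (\<lambda>g. g |` X) (dummy_family e \<mu> L) =
    map_pmf (\<lambda>(b, g). dummy_ext e b g)
      (pair_pmf coin (map_pmf (\<lambda>g. g |` ((L - {e}) \<inter> (X - {e}))) (\<mu> (L - {e}))))"
  unfolding dummy_family_def pair_map_pmf2 map_pmf_comp
  by (rule map_pmf_cong) (auto simp: dummy_ext_restrict_in assms)

lemma map_mirror_dummy_family: "map_pmf mirror (dummy_family e \<mu> L) = dummy_family e \<mu> L"
proof -
  have "map_pmf mirror (dummy_family e \<mu> L) =
      map_pmf (\<lambda>(b, g). dummy_ext e b (g |` (L - {e})))
        (map_pmf (\<lambda>(b, g). (Not b, id g)) (pair_pmf coin (\<mu> (L - {e}))))"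
    unfolding dummy_family_def map_pmf_comp by (rule map_pmf_cong) (auto simp: mirror_dummy_ext)
  then show ?thesis
    by (simp only: map_pair map_Not_coin pmf.map_id dummy_family_def)
qed

lemma pmf_dummy_family_mirror: "pmf (dummy_family e \<mu> L) (mirror g) = pmf (dummy_family e \<mu> L) g"
  by (metis map_mirror_dummy_family inj_mirror pmf_map_inj')

lemma cond_dummy_family_insert:
  assumes eL: "e \<notin> L" and SL: "S \<subseteq> L"
    and ne: "set_pmf (\<mu> L) \<inter> {g. g |` S = f |` S} \<noteq> {}"
  shows "cond_pmf (dummy_family e \<mu> (insert e L))
        {g. g |` insert e S = dummy_ext e b f |` insert e S}
    = map_pmf (\<lambda>g. dummy_ext e b (g |` L)) (cond_pmf (\<mu> L) {g. g |` S = f |` S})"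
proof -
  have S: "S - {e} = S" "L \<inter> S = S" using eL SL by auto
  define F where "F = (\<lambda>(b, g). dummy_ext e b (g |` L))"
  define A where "A = {g. g |` S = f |` S}"
  have "F -` {g. g |` insert e S = dummy_ext e b f |` insert e S} = {b} \<times> A"
  proof (rule set_eqI)
    fix x :: "bool \<times> 'a assignment"
    obtain b' g where x: "x = (b', g)" by (cases x)
    have "F x |` insert e S = dummy_ext e b' (g |` S)"
      and "dummy_ext e b f |` insert e S = dummy_ext e b (f |` S)"
      unfolding x F_def by (simp_all add: dummy_ext_restrict_in S)
    then show "x \<in> F -` {g. g |` insert e S = dummy_ext e b f |` insert e S} \<longleftrightarrow> x \<in> {b} \<times> A"
      using dummy_ext_eq_iff[of e "g |` S" "f |` S" b' b] eL SL unfolding x A_def by auto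
  qed
  moreover have "set_pmf (pair_pmf coin (\<mu> L)) \<inter> {b} \<times> A \<noteq> {}" using ne unfolding A_def by auto
  ultimately show ?thesis
    using ne unfolding dummy_family_insert[OF eL, folded F_def] A_def[symmetric]
    by (simp add: cond_map_pmf cond_pair_pmf_singleton_times map_pmf_comp F_def)
qed

lemma pmf_restrict_dummy_mixture:
  assumes eV: "e \<notin> V" and dom: "\<And>h. h \<in> set_pmf D \<Longrightarrow> dom h \<subseteq> V"
  shows "pmf (map_pmf (\<lambda>h. h |` V) (bind_pmf coin (\<lambda>b. map_pmf (dummy_ext e b) D))) y
    = (pmf D y + pmf D (mirror y)) / 2"
proof -
  have "map_pmf (\<lambda>h. dummy_ext e b h |` V) D = (if b then map_pmf mirror D else D)" for b
    using eV dom
    by (auto simp: dummy_ext_restrict_out restrict_map_dom_subset intro: map_pmf_idI map_pmf_cong)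
  then have "map_pmf (\<lambda>h. h |` V) (bind_pmf coin (\<lambda>b. map_pmf (dummy_ext e b) D))
      = bind_pmf coin (\<lambda>b. if b then map_pmf mirror D else D)"
    by (simp add: map_bind_pmf map_pmf_comp)
  moreover have "pmf (map_pmf mirror D) y = pmf D (mirror y)"
    by (metis inj_mirror mirror_mirror pmf_map_inj')
  ultimately show ?thesis
    unfolding coin_def by (simp add: pmf_bind_pmf_of_set UNIV_bool)
qed

lemma fam_sets_remove_dummy:
  assumes eV: "e \<notin> V" and BV: "\<forall>i\<in>I. B i \<subseteq> V"
    and L: "L \<in> fam_sets (insert e V) I (\<lambda>i. insert e (B i))"
  shows "e \<in> L" and "L - {e} \<in> insert {} (fam_sets V I B)"
proof -
  obtain i s t where L_eq: "L = insert e (B i) \<union> {s, t}" and i: "i \<in> I"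
    and st: "s \<in> insert e V" "t \<in> insert e V"
    using L unfolding fam_sets_def by blast
  show "e \<in> L" unfolding L_eq by blast
  show "L - {e} \<in> insert {} (fam_sets V I B)"
  proof (cases "L - {e} = {}")
    case False
    then obtain x where x: "x \<in> L - {e}" by blast
    have Bi: "B i \<subseteq> V" "e \<notin> B i" using BV i eV by auto
    then have "x \<in> V" using x st unfolding L_eq by auto
    define s' where "s' = (if s = e then x else s)"
    define t' where "t' = (if t = e then x else t)"
    have "L - {e} = B i \<union> {s', t'}"
      using x Bi(2) unfolding L_eq s'_def t'_def by auto
    moreover have "s' \<in> V" "t' \<in> V" using \<open>x \<in> V\<close> st unfolding s'_def t'_def by auto
    then have "B i \<union> {s', t'} \<in> fam_sets V I B" using i unfolding fam_sets_def by blast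
    ultimately show ?thesis by simp
  qed simp
qed

lemma consistent_family_dom:
  "consistent_family V I B \<mu> \<Longrightarrow> L \<in> fam_sets V I B \<Longrightarrow> g \<in> set_pmf (\<mu> L) \<Longrightarrow> dom g = L"
  unfolding consistent_family_def by simp

lemma consistent_family_marginals:
  assumes "consistent_family V I B \<mu>"
    and "L1 \<in> insert {} (fam_sets V I B)" "L2 \<in> insert {} (fam_sets V I B)"
  shows "map_pmf (\<lambda>g. g |` (L1 \<inter> L2)) (\<mu> L1) = map_pmf (\<lambda>g. g |` (L1 \<inter> L2)) (\<mu> L2)"
proof (cases "L1 = {} \<or> L2 = {}")
  case True
  then show ?thesis by (auto simp: map_pmf_const)
next
  case False
  then show ?thesis using assms unfolding consistent_family_def by blast
qed

lemma consistent_dummy_family: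
  assumes cf: "consistent_family V I B \<mu>" and BV: "\<forall>i\<in>I. B i \<subseteq> V" and eV: "e \<notin> V"
  shows "consistent_family (insert e V) I (\<lambda>i. insert e (B i)) (dummy_family e \<mu>)"
  unfolding consistent_family_def
proof (intro conjI ballI)
  fix L g
  assume L: "L \<in> fam_sets (insert e V) I (\<lambda>i. insert e (B i))"
    and g: "g \<in> set_pmf (dummy_family e \<mu> L)"
  then obtain b h where h: "h \<in> set_pmf (\<mu> (L - {e}))" and g_eq: "g = dummy_ext e b (h |` (L - {e}))"
    unfolding dummy_family_def by auto
  have "dom h \<inter> (L - {e}) = L - {e}"
  proof (cases "L - {e} = {}")
    case False
    then have "L - {e} \<in> fam_sets V I B" using fam_sets_remove_dummy(2)[OF eV BV L] by simp
    then have "dom h = L - {e}" using consistent_family_dom[OF cf _ h] by blast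
    then show ?thesis by simp
  qed auto
  then show "dom g = L" using fam_sets_remove_dummy(1)[OF eV BV L] g_eq by auto
next
  fix L1 L2
  assume L1: "L1 \<in> fam_sets (insert e V) I (\<lambda>i. insert e (B i))"
    and L2: "L2 \<in> fam_sets (insert e V) I (\<lambda>i. insert e (B i))"
  have "e \<in> L1 \<inter> L2" using fam_sets_remove_dummy(1)[OF eV BV] L1 L2 by blast
  moreover have "(L1 - {e}) \<inter> (L1 \<inter> L2 - {e}) = (L1 - {e}) \<inter> (L2 - {e})"
    and "(L2 - {e}) \<inter> (L1 \<inter> L2 - {e}) = (L1 - {e}) \<inter> (L2 - {e})" by auto
  moreover have "map_pmf (\<lambda>g. g |` ((L1 - {e}) \<inter> (L2 - {e}))) (\<mu> (L1 - {e})) =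
      map_pmf (\<lambda>g. g |` ((L1 - {e}) \<inter> (L2 - {e}))) (\<mu> (L2 - {e}))"
    by (rule consistent_family_marginals[OF cf fam_sets_remove_dummy(2)[OF eV BV L1]
          fam_sets_remove_dummy(2)[OF eV BV L2]])
  ultimately show "map_pmf (\<lambda>g. g |` (L1 \<inter> L2)) (dummy_family e \<mu> L1) =
      map_pmf (\<lambda>g. g |` (L1 \<inter> L2)) (dummy_family e \<mu> L2)"
    by (simp only: map_restrict_dummy_family)
qed

lemma symmetric_dummy_family: "symmetric_family V I B (dummy_family e \<mu>)"
  unfolding symmetric_family_def by (simp add: pmf_dummy_family_mirror)

locale rooted_tree =
  fixes I :: "'n set" and TE :: "('n \<times> 'n) set" and r :: 'n
  assumes tree: "is_tree I TE" and root: "r \<in> I"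
begin

abbreviation depth :: "'n \<Rightarrow> nat" where "depth \<equiv> tdist TE r"

definition parent :: "'n \<Rightarrow> 'n" where
  "parent x = (SOME w. (w, x) \<in> TE \<and> depth w + 1 = depth x)"

lemma edges_subset: "TE \<subseteq> I \<times> I"
  using tree unfolding is_tree_def by auto

lemma walk_of_depth: "x \<in> I \<Longrightarrow> (r, x) \<in> TE ^^ depth x"
proof -
  assume "x \<in> I"
  then have "(r, x) \<in> TE\<^sup>*" using tree root unfolding is_tree_def by auto
  then obtain k where "(r, x) \<in> TE ^^ k" using rtrancl_power by blast
  then show ?thesis unfolding tdist_def by (rule LeastI)
qed

lemma depth_le: "(r, x) \<in> TE ^^ k \<Longrightarrow> depth x \<le> k"
  unfolding tdist_def by (rule Least_le)

lemma depth_edge_le: "(a, b) \<in> TE \<Longrightarrow> depth b \<le> depth a + 1"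
proof -
  assume ab: "(a, b) \<in> TE"
  then have "(r, a) \<in> TE ^^ depth a" using edges_subset walk_of_depth by blast
  with ab have "(r, b) \<in> TE ^^ Suc (depth a)" by auto
  then show ?thesis using depth_le by fastforce
qed

lemma depth_eq_0_iff: "x \<in> I \<Longrightarrow> depth x = 0 \<longleftrightarrow> x = r"
  using walk_of_depth[of x] depth_le[of r 0] by auto

lemma parent_exists: "x \<in> I \<Longrightarrow> x \<noteq> r \<Longrightarrow> \<exists>w. (w, x) \<in> TE \<and> depth w + 1 = depth x"
proof -
  assume x: "x \<in> I" "x \<noteq> r"
  then obtain n where n: "depth x = Suc n" using depth_eq_0_iff by (cases "depth x") auto
  then have "(r, x) \<in> TE ^^ Suc n" using walk_of_depth[OF x(1)] by simp
  then obtain w where w: "(r, w) \<in> TE ^^ n" "(w, x) \<in> TE" by auto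
  have "depth w + 1 = depth x"
    using depth_le[OF w(1)] depth_edge_le[OF w(2)] n by simp
  with w(2) show ?thesis by blast
qed

lemma parent_edge_depth: "x \<in> I \<Longrightarrow> x \<noteq> r \<Longrightarrow> (parent x, x) \<in> TE \<and> depth (parent x) + 1 = depth x"
  unfolding parent_def by (rule someI_ex) (rule parent_exists)

text \<open>The parent edges already account for all |I| - 1 undirected edges of the tree.\<close>

lemma edge_parent_cases:
  assumes ab: "(a, b) \<in> TE"
  shows "(b \<in> I \<and> b \<noteq> r \<and> a = parent b) \<or> (a \<in> I \<and> a \<noteq> r \<and> b = parent a)"
proof -
  let ?J = "I - {r}"
  define down where "down = (\<lambda>x. (parent x, x)) ` ?J"
  define up where "up = (\<lambda>x. (x, parent x)) ` ?J"
  have fin: "finite I" and sym: "sym TE" and cardTE: "card TE = 2 * (card I - 1)"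
    using tree unfolding is_tree_def by auto
  have down_sub: "down \<subseteq> TE" unfolding down_def using parent_edge_depth by auto
  have up_sub: "up \<subseteq> TE"
    unfolding up_def using parent_edge_depth sym by (auto dest: symD)
  have "card down = card I - 1" "card up = card I - 1"
    unfolding down_def up_def by (subst card_image; auto simp: inj_on_def root fin)+
  moreover have "down \<inter> up = {}"
  proof (rule ccontr)
    assume "down \<inter> up \<noteq> {}"
    then obtain x y where x: "x \<in> ?J" and y: "y \<in> ?J" and xy: "(parent x, x) = (y, parent y)"
      unfolding down_def up_def by blast
    from xy have "depth (parent x) = depth y" "depth x = depth (parent y)" by auto
    moreover have "depth (parent x) + 1 = depth x" "depth (parent y) + 1 = depth y"
      using parent_edge_depth x y by auto
    ultimately show False by linarith
  qed
  moreover have finTE: "finite TE" using finite_subset[OF edges_subset] fin by simp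
  ultimately have "card (down \<union> up) = card TE"
    using card_Un_disjoint[of down up] finite_subset[OF down_sub finTE]
      finite_subset[OF up_sub finTE] cardTE by simp
  then have "down \<union> up = TE" using down_sub up_sub finTE by (intro card_subset_eq) auto
  with ab show ?thesis unfolding down_def up_def by auto
qed

definition parent_rel :: "('n \<times> 'n) set" where
  "parent_rel = {(x, parent x) | x. x \<in> I \<and> x \<noteq> r}"

lemma ancestor_depth: "(x, y) \<in> parent_rel\<^sup>* \<Longrightarrow> x = y \<or> depth y < depth x"
proof (induction rule: converse_rtrancl_induct)
  case (step x z)
  then have "depth z + 1 = depth x" using parent_edge_depth unfolding parent_rel_def by auto
  with step show ?case by auto
qed simp

lemma walk_avoiding_parent:
  assumes "(i, k) \<in> (TE \<inter> S \<times> S)\<^sup>*" "i \<in> I" "i \<noteq> r" "parent i \<notin> S"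
  shows "(k, i) \<in> parent_rel\<^sup>*"
  using assms(1)
proof (induction rule: rtrancl_induct)
  case (step x y)
  then have xy: "(x, y) \<in> TE" "y \<in> S" by auto
  from edge_parent_cases[OF xy(1)] show ?case
  proof
    assume "y \<in> I \<and> y \<noteq> r \<and> x = parent y"
    then have "(y, x) \<in> parent_rel" unfolding parent_rel_def by auto
    with step.IH show ?thesis by auto
  next
    assume x: "x \<in> I \<and> x \<noteq> r \<and> y = parent x"
    with xy(2) assms(4) have "x \<noteq> i" by auto
    from step.IH show ?thesis
    proof (cases rule: converse_rtranclE)
      case (step z)
      with x show ?thesis unfolding parent_rel_def by auto
    qed (use \<open>x \<noteq> i\<close> in simp)
  qed
qed simp

end

locale sc_setting =
  fixes V :: "'v set" and E :: "('v \<times> 'v) set"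
    and I :: "'n set" and TE :: "('n \<times> 'n) set" and B :: "'n \<Rightarrow> 'v set"
    and \<mu> :: "'v set \<Rightarrow> 'v assignment pmf" and i0 :: 'n and ns :: "'n list"
  assumes decomp: "tree_decomposition V E I TE B"
    and consistent: "consistent_family V I B \<mu>"
    and order: "sc_order I TE i0 ns"

sublocale sc_setting \<subseteq> rooted_tree I TE i0
  using decomp order by unfold_locales (auto simp: tree_decomposition_def sc_order_def)

context sc_setting
begin

lemma bag_subset: "i \<in> I \<Longrightarrow> B i \<subseteq> V"
  using decomp unfolding tree_decomposition_def by auto

lemma bag_in_fam_sets: "i \<in> I \<Longrightarrow> B i \<in> insert {} (fam_sets V I B)"
proof (cases "B i = {}")
  case False
  then obtain x where x: "x \<in> B i" by auto
  then have "B i = B i \<union> {x, x}" by auto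
  moreover assume "i \<in> I"
  ultimately show ?thesis using x bag_subset unfolding fam_sets_def by blast
qed simp

lemma bag_dom: "i \<in> I \<Longrightarrow> g \<in> set_pmf (\<mu> (B i)) \<Longrightarrow> B i \<noteq> {} \<Longrightarrow> dom g = B i"
  using bag_in_fam_sets consistent_family_dom[OF consistent] by blast

lemma order_split:
  assumes "ns = dn @ i # is" "dn \<noteq> []"
  shows "i \<in> I" "i \<noteq> i0" "i \<notin> set dn" "set dn \<subseteq> I"
    "\<forall>k\<in>set dn. depth k \<le> depth i" "\<forall>k\<in>set is. depth i \<le> depth k"
proof -
  have "hd ns = i0" "distinct ns" "set ns = I" "sorted (map depth ns)"
    using order unfolding sc_order_def by auto
  with assms show "i \<in> I" "i \<notin> set dn" "set dn \<subseteq> I"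
    "\<forall>k\<in>set dn. depth k \<le> depth i" "\<forall>k\<in>set is. depth i \<le> depth k"
    by (auto simp: sorted_append)
  show "i \<noteq> i0" using assms \<open>hd ns = i0\<close> \<open>i \<notin> set dn\<close> by (cases dn) auto
qed

lemma parent_processed:
  assumes "ns = dn @ i # is" "dn \<noteq> []"
  shows "parent i \<in> set dn"
proof -
  note split = order_split[OF assms]
  have pi: "(parent i, i) \<in> TE" "depth (parent i) + 1 = depth i"
    using parent_edge_depth split(1,2) by auto
  have "parent i \<in> set ns"
    using pi(1) edges_subset order unfolding sc_order_def by auto
  moreover have "parent i \<notin> set (i # is)" using pi(2) split(6) by fastforce
  ultimately show ?thesis using assms(1) by auto
qed

lemma processed_neighbour_is_parent:
  assumes "ns = dn @ i # is" "dn \<noteq> []" "j \<in> set dn" "(j, i) \<in> TE"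
  shows "j = parent i"
  using edge_parent_cases[OF assms(4)] parent_edge_depth[of j] order_split(5)[OF assms(1,2)] assms(3) by force

lemma some_processed_neighbour:
  assumes "ns = dn @ i # is" "dn \<noteq> []"
  shows "(SOME j. j \<in> set dn \<and> (j, i) \<in> TE) = parent i"
proof (rule some_equality)
  show "parent i \<in> set dn \<and> (parent i, i) \<in> TE"
    using parent_processed[OF assms] parent_edge_depth order_split(1,2)[OF assms] by auto
qed (use processed_neighbour_is_parent[OF assms] in blast)

text \<open>Running intersection: the bags containing a vertex form a subtree, so a vertex shared
  with a bag processed earlier must lie in the parent bag.\<close>

lemma bag_inter_processed_subset_parent:
  assumes "ns = dn @ i # is" "dn \<noteq> []" "k \<in> set dn"
  shows "B i \<inter> B k \<subseteq> B (parent i)"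
proof
  fix v assume v: "v \<in> B i \<inter> B k"
  note split = order_split[OF assms(1,2)]
  show "v \<in> B (parent i)"
  proof (rule ccontr)
    assume "v \<notin> B (parent i)"
    let ?S = "{k \<in> I. v \<in> B k}"
    have "(i, k) \<in> (TE \<inter> ?S \<times> ?S)\<^sup>*"
      using decomp v bag_subset split assms(3) unfolding tree_decomposition_def by blast
    then have "(k, i) \<in> parent_rel\<^sup>*"
      using walk_avoiding_parent split(1,2) \<open>v \<notin> B (parent i)\<close> by blast
    then show False using ancestor_depth split assms(3) by fastforce
  qed
qed

text \<open>The invariant of SC-Round that every processed bag carries an assignment from the support
  of its distribution. It makes every conditioning event nonempty, so that \<open>cond_pmf\<close> is
  never applied where it is unspecified.\<close>

definition supported :: "'n list \<Rightarrow> 'v assignment \<Rightarrow> bool" where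
  "supported dn f \<longleftrightarrow> (\<forall>k\<in>set dn. B k \<noteq> {} \<longrightarrow> f |` B k \<in> set_pmf (\<mu> (B k)))"

lemma supported_agreement_possible:
  assumes "supported dn f" "j \<in> set dn" "j \<in> I" "i \<in> I"
  shows "set_pmf (\<mu> (B i)) \<inter> {g. g |` (B i \<inter> B j) = f |` (B i \<inter> B j)} \<noteq> {}"
proof (cases "B i = {} \<or> B j = {}")
  case True
  then show ?thesis using set_pmf_not_empty by fastforce
next
  case False
  then have "f |` B j \<in> set_pmf (\<mu> (B j))" using assms unfolding supported_def by auto
  then have "(f |` B j) |` (B i \<inter> B j) \<in> set_pmf (map_pmf (\<lambda>g. g |` (B i \<inter> B j)) (\<mu> (B j)))"
    unfolding set_map_pmf by (rule imageI)
  moreover have "(f |` B j) |` (B i \<inter> B j) = f |` (B i \<inter> B j)"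
    by (simp add: Int_absorb1)
  ultimately have "f |` (B i \<inter> B j) \<in> set_pmf (map_pmf (\<lambda>g. g |` (B i \<inter> B j)) (\<mu> (B j)))"
    by simp
  also have "map_pmf (\<lambda>g. g |` (B i \<inter> B j)) (\<mu> (B j)) = map_pmf (\<lambda>g. g |` (B i \<inter> B j)) (\<mu> (B i))"
    by (rule consistent_family_marginals[OF consistent bag_in_fam_sets[OF assms(4)]
          bag_in_fam_sets[OF assms(3)], symmetric])
  finally show ?thesis by auto
qed

lemma supported_extend:
  assumes sup: "supported dn f" and ns: "ns = dn @ i # is" and dn: "dn \<noteq> []"
    and g: "g \<in> set_pmf (\<mu> (B i))" and agree: "g |` (B i \<inter> B (parent i)) = f |` (B i \<inter> B (parent i))"
  shows "supported (dn @ [i]) (f ++ g |` (B i - B (parent i)))"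
proof -
  let ?f = "f ++ g |` (B i - B (parent i))"
  note split = order_split[OF ns dn]
  have "?f |` B i = g" if "B i \<noteq> {}"
  proof
    fix x
    have "dom g = B i" using bag_dom split(1) g that by blast
    then have "g x \<noteq> None \<longleftrightarrow> x \<in> B i" by (metis domIff)
    moreover have "f x = g x" if "x \<in> B i \<inter> B (parent i)"
      using agree that by (metis restrict_in)
    ultimately show "(?f |` B i) x = g x"
      by (cases "x \<in> B i"; cases "x \<in> B (parent i)") (auto simp: map_add_def split: option.split)
  qed
  moreover have "?f |` B k = f |` B k" if k: "k \<in> set dn" for k
  proof
    fix x
    consider "x \<notin> B k" | "x \<notin> B i - B (parent i)"
      using bag_inter_processed_subset_parent[OF ns dn k] by blast
    then show "(?f |` B k) x = (f |` B k) x" by cases (auto simp: map_add_def restrict_map_def)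
  qed
  ultimately show ?thesis using sup g unfolding supported_def by auto
qed

lemma sc_steps_dom:
  "set is \<subseteq> I \<Longrightarrow> dom f \<subseteq> V \<Longrightarrow> h \<in> set_pmf (sc_steps is \<mu> B TE dn f) \<Longrightarrow> dom h \<subseteq> V"
proof (induction "is" arbitrary: dn f)
  case (Cons i "is")
  then obtain X g where "h \<in> set_pmf (sc_steps is \<mu> B TE (dn @ [i]) (f ++ g |` (B i - X)))"
    unfolding sc_steps.simps Let_def set_bind_pmf by blast
  moreover have "dom (f ++ g |` (B i - X)) \<subseteq> V" using Cons.prems bag_subset by auto
  moreover have "set is \<subseteq> I" using Cons.prems(1) by simp
  ultimately show ?case using Cons.IH by blast
qed simp

lemma sc_round_dom: "h \<in> set_pmf (sc_round \<mu> B TE ns) \<Longrightarrow> dom h \<subseteq> V"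
proof -
  assume "h \<in> set_pmf (sc_round \<mu> B TE ns)"
  then obtain g where h: "h \<in> set_pmf (sc_steps (tl ns) \<mu> B TE [hd ns] (g |` B (hd ns)))"
    unfolding sc_round_def set_bind_pmf by blast
  have "hd ns = i0" "set ns = I" "ns \<noteq> []" using order unfolding sc_order_def by auto
  then have "set (tl ns) \<subseteq> I" "dom (g |` B (hd ns)) \<subseteq> V"
    using bag_subset root by (auto simp: list.set_sel(2))
  then show ?thesis using sc_steps_dom h by blast
qed

end

locale sc_dummy = sc_setting +
  fixes e
  assumes dummy_fresh: "e \<notin> V"
begin

lemma sc_steps_dummy:
  "ns = dn @ is \<Longrightarrow> dn \<noteq> [] \<Longrightarrow> supported dn f \<Longrightarrow>
   sc_steps is (dummy_family e \<mu>) (\<lambda>i. insert e (B i)) TE dn (dummy_ext e b f)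
     = map_pmf (dummy_ext e b) (sc_steps is \<mu> B TE dn f)"
proof (induction "is" arbitrary: dn f)
  case (Cons i "is")
  then have ns: "ns = dn @ i # is" by simp
  note split = order_split[OF ns Cons.prems(2)]
  define Bp where "Bp = B i \<inter> B (parent i)"
  define A where "A = {g. g |` Bp = f |` Bp}"
  have Bm: "B i - Bp = B i - B (parent i)" and Bp_sub: "Bp \<subseteq> B i" unfolding Bp_def by auto
  have eBi: "e \<notin> B i" using split(1) bag_subset dummy_fresh by auto
  have ne: "set_pmf (\<mu> (B i)) \<inter> A \<noteq> {}"
    unfolding A_def Bp_def
    using supported_agreement_possible[OF Cons.prems(3)] parent_processed[OF ns Cons.prems(2)] split
    by blast
  have "sc_steps is (dummy_family e \<mu>) (\<lambda>i. insert e (B i)) TE (dn @ [i])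
      (dummy_ext e b f ++ dummy_ext e b (g |` B i) |` (B i - Bp))
    = map_pmf (dummy_ext e b) (sc_steps is \<mu> B TE (dn @ [i]) (f ++ g |` (B i - Bp)))"
    if "g \<in> set_pmf (cond_pmf (\<mu> (B i)) A)" for g
  proof -
    have "supported (dn @ [i]) (f ++ g |` (B i - Bp))"
      unfolding Bm
      by (rule supported_extend[OF Cons.prems(3) ns Cons.prems(2)])
        (use that ne in \<open>auto simp: A_def Bp_def\<close>)
    moreover have "(g |` B i) |` (B i - Bp) = g |` (B i - Bp)" by (simp add: Int_absorb1)
    ultimately show ?thesis
      using Cons.IH[of "dn @ [i]"] ns eBi by (simp add: dummy_ext_map_add_restrict)
  qed
  moreover have "insert e (B i) \<inter> insert e (B (parent i)) = insert e Bp"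
    "insert e (B i) - insert e Bp = B i - Bp" using eBi unfolding Bp_def by auto
  ultimately show ?case
    using some_processed_neighbour[OF ns Cons.prems(2)]
    by (simp add: Let_def Bp_def[symmetric] A_def[symmetric] bind_map_pmf map_bind_pmf
        cond_dummy_family_insert[where \<mu> = \<mu>, OF eBi Bp_sub ne[unfolded A_def]]
        cong: bind_pmf_cong)
qed simp

lemma sc_round_dummy:
  "sc_round (dummy_family e \<mu>) (\<lambda>i. insert e (B i)) TE ns
     = bind_pmf coin (\<lambda>b. map_pmf (dummy_ext e b) (sc_round \<mu> B TE ns))"
proof -
  have hd: "hd ns = i0" and ns: "ns = [i0] @ tl ns"
    using order unfolding sc_order_def by (auto intro: hd_Cons_tl[symmetric])
  have eB: "e \<notin> B i0" using bag_subset root dummy_fresh by auto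
  have "supported [i0] (g |` B i0)" if "g \<in> set_pmf (\<mu> (B i0))" for g
    using bag_dom[OF root that] by (auto simp: supported_def restrict_map_dom_subset that)
  then have "sc_steps (tl ns) (dummy_family e \<mu>) (\<lambda>i. insert e (B i)) TE [i0] (dummy_ext e b (g |` B i0))
     = map_pmf (dummy_ext e b) (sc_steps (tl ns) \<mu> B TE [i0] (g |` B i0))"
    if "g \<in> set_pmf (\<mu> (B i0))" for b g
    using sc_steps_dummy[OF ns] that by simp
  then show ?thesis
    unfolding sc_round_def hd dummy_family_insert[OF eB] pair_pmf_def
    by (simp add: bind_map_pmf map_bind_pmf bind_assoc_pmf bind_return_pmf dummy_ext_restrict_in eB
        cong: bind_pmf_cong)
qed

lemma sc_round_dummy_mirror_sum:
  "pmf (sc_round \<mu> B TE ns) f + pmf (sc_round \<mu> B TE ns) (mirror f)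
   = pmf (map_pmf (\<lambda>h. h |` V) (sc_round (dummy_family e \<mu>) (\<lambda>i. insert e (B i)) TE ns)) f
     + pmf (map_pmf (\<lambda>h. h |` V) (sc_round (dummy_family e \<mu>) (\<lambda>i. insert e (B i)) TE ns)) (mirror f)"
proof -
  have "pmf (map_pmf (\<lambda>h. h |` V) (sc_round (dummy_family e \<mu>) (\<lambda>i. insert e (B i)) TE ns)) y
      = (pmf (sc_round \<mu> B TE ns) y + pmf (sc_round \<mu> B TE ns) (mirror y)) / 2" for y
    unfolding sc_round_dummy by (rule pmf_restrict_dummy_mixture[OF dummy_fresh sc_round_dom])
  from this[of f] this[of "mirror f"] show ?thesis
    by (simp only: mirror_mirror) (simp add: field_simps)
qed

end

theorem lemmaA2:
  fixes V :: "'v set" and E :: "('v \<times> 'v) set"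
    and I :: "'n set" and TE :: "('n \<times> 'n) set" and B :: "'n \<Rightarrow> 'v set"
    and \<mu> :: "'v set \<Rightarrow> 'v assignment pmf" and i0 :: 'n and ns :: "'n list" and e :: 'v
  assumes "tree_decomposition V E I TE B"
    and "consistent_family V I B \<mu>"
    and "sc_order I TE i0 ns"
    and "e \<notin> V"
  shows "\<exists>\<mu>'. consistent_family (insert e V) I (\<lambda>i. insert e (B i)) \<mu>'
          \<and> symmetric_family (insert e V) I (\<lambda>i. insert e (B i)) \<mu>'
          \<and> (\<forall>f'. dom f' = V \<longrightarrow>
               pmf (sc_round \<mu> B TE ns) f' + pmf (sc_round \<mu> B TE ns) (mirror f')
             = pmf (map_pmf (\<lambda>h. h |` V) (sc_round \<mu>' (\<lambda>i. insert e (B i)) TE ns)) f'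
               + pmf (map_pmf (\<lambda>h. h |` V) (sc_round \<mu>' (\<lambda>i. insert e (B i)) TE ns)) (mirror f'))"
proof -
  interpret sc_dummy V E I TE B \<mu> i0 ns e
    by (unfold_locales; fact assms)
  show ?thesis
  proof (intro exI[of _ "dummy_family e \<mu>"] conjI allI impI)
    show "consistent_family (insert e V) I (\<lambda>i. insert e (B i)) (dummy_family e \<mu>)"
      using consistent_dummy_family[OF consistent _ dummy_fresh] bag_subset by blast
  qed (rule symmetric_dummy_family sc_round_dummy_mirror_sum)+
qed

end
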